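(* Let $X$ be a geodesic metric space and let $\Gamma\subset X$ be a topological arc connecting two points $a,b\in X$. Then for every $\varepsilon>0$ there exists a biLipschitz curve contained in the $\varepsilon$-neighborhood of $\Gamma$ and connecting $a$ and $b$.
   Context: A topological arc is a subset homeomorphic to a closed interval. A curve $\gamma\colon[s,t]\to X$ is biLipschitz if there is $K\ge1$ with $K^{-1}|r-r'|\le d(\gamma(r),\gamma(r'))\le K|r-r'|$ for all $r,r'$. *)

theory Defs
  imports "HOL-Analysis.Analysis"
begin

definition geodesic_space :: "'a::metric_space set \<Rightarrow> bool" where
  "geodesic_space S \<longleftrightarrow>
     (\<forall>x\<in>S. \<forall>y\<in>S. \<exists>\<gamma>::real \<Rightarrow> 'a.
        \<gamma> ` {0..dist x y} \<subseteq> S \<and> \<gamma> 0 = x \<and> \<gamma> (dist x y) = y \<and>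
        (\<forall>s\<in>{0..dist x y}. \<forall>t\<in>{0..dist x y}. dist (\<gamma> s) (\<gamma> t) = \<bar>s - t\<bar>))"

definition bilipschitz_on :: "real set \<Rightarrow> (real \<Rightarrow> 'a::metric_space) \<Rightarrow> bool" where
  "bilipschitz_on I \<gamma> \<longleftrightarrow>
     (\<exists>K\<ge>1. \<forall>r\<in>I. \<forall>r'\<in>I.
        \<bar>r - r'\<bar> / K \<le> dist (\<gamma> r) (\<gamma> r') \<and> dist (\<gamma> r) (\<gamma> r') \<le> K * \<bar>r - r'\<bar>)"

definition eps_nbhd :: "real \<Rightarrow> 'a::metric_space set \<Rightarrow> 'a set" where
  "eps_nbhd e A = {x. \<exists>y\<in>A. dist x y < e}"

end

theory Submission
  imports Defs
begin

text \<open>Sample the arc at points \<open>p\<^sub>0 = a, \<dots>, p\<^sub>N = b\<close> with consecutive distances below \<open>\<epsilon>\<close>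
  and build the curve backwards from \<open>b\<close>. Given a biLipschitz curve \<open>P\<close> on \<open>[0, L]\<close> starting
  at \<open>p\<^sub>i\<^sub>+\<^sub>1\<close>, choose \<open>\<beta>\<^sub>0\<close> minimising \<open>d(p\<^sub>i, P \<beta>) - c \<beta>\<close> for a small \<open>c \<in> (0,1]\<close>, and
  replace \<open>P|[0,\<beta>\<^sub>0]\<close> by a geodesic from \<open>p\<^sub>i\<close> to \<open>P \<beta>\<^sub>0\<close>. The minimality of \<open>\<beta>\<^sub>0\<close> says
  that \<open>P\<close> recedes from \<open>p\<^sub>i\<close> at rate at least \<open>c\<close> beyond \<open>\<beta>\<^sub>0\<close>, which is exactly the lower
  bound needed for the concatenation to be biLipschitz (with constant \<open>max K (1/c)\<close>), and the
  geodesic has length at most \<open>d(p\<^sub>i, p\<^sub>i\<^sub>+\<^sub>1) + c L < \<epsilon>\<close>.\<close>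

definition bilipschitz_with :: "real \<Rightarrow> real set \<Rightarrow> (real \<Rightarrow> 'a::metric_space) \<Rightarrow> bool" where
  "bilipschitz_with K I \<gamma> \<longleftrightarrow>
     (\<forall>r\<in>I. \<forall>r'\<in>I.
        \<bar>r - r'\<bar> / K \<le> dist (\<gamma> r) (\<gamma> r') \<and> dist (\<gamma> r) (\<gamma> r') \<le> K * \<bar>r - r'\<bar>)"

lemma bilipschitz_on_iff_with: "bilipschitz_on I \<gamma> \<longleftrightarrow> (\<exists>K\<ge>1. bilipschitz_with K I \<gamma>)"
  by (simp add: bilipschitz_on_def bilipschitz_with_def)

lemma bilipschitz_with_mono:
  assumes "bilipschitz_with K I \<gamma>" "0 < K" "K \<le> K'"
  shows "bilipschitz_with K' I \<gamma>"
  unfolding bilipschitz_with_def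
proof (intro ballI)
  fix r r' assume "r \<in> I" "r' \<in> I"
  then have "\<bar>r - r'\<bar> / K \<le> dist (\<gamma> r) (\<gamma> r')" "dist (\<gamma> r) (\<gamma> r') \<le> K * \<bar>r - r'\<bar>"
    using assms(1) unfolding bilipschitz_with_def by auto
  moreover have "\<bar>r - r'\<bar> / K' \<le> \<bar>r - r'\<bar> / K" "K * \<bar>r - r'\<bar> \<le> K' * \<bar>r - r'\<bar>"
    using assms(2,3) by (auto simp: frac_le mult_right_mono)
  ultimately show "\<bar>r - r'\<bar> / K' \<le> dist (\<gamma> r) (\<gamma> r') \<and> dist (\<gamma> r) (\<gamma> r') \<le> K' * \<bar>r - r'\<bar>"
    by linarith
qed

lemma bilipschitz_withI_ordered:
  assumes "\<And>r r'. r \<in> I \<Longrightarrow> r' \<in> I \<Longrightarrow> r \<le> r' \<Longrightarrow>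
             (r' - r) / K \<le> dist (\<gamma> r) (\<gamma> r') \<and> dist (\<gamma> r) (\<gamma> r') \<le> K * (r' - r)"
  shows "bilipschitz_with K I \<gamma>"
  unfolding bilipschitz_with_def
proof (intro ballI)
  fix r r' assume "r \<in> I" "r' \<in> I"
  then show "\<bar>r - r'\<bar> / K \<le> dist (\<gamma> r) (\<gamma> r') \<and> dist (\<gamma> r) (\<gamma> r') \<le> K * \<bar>r - r'\<bar>"
    using assms[of r r'] assms[of r' r] by (cases "r \<le> r'") (auto simp: dist_commute)
qed

lemma bilipschitz_with_imp_continuous_on:
  assumes "bilipschitz_with K I \<gamma>" "0 \<le> K"
  shows "continuous_on I \<gamma>"
proof (rule lipschitz_on_continuous_on)
  show "K-lipschitz_on I \<gamma>"
    using assms unfolding bilipschitz_with_def lipschitz_on_def by (auto simp: dist_real_def)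
qed

lemma geodesic_then_curve_bilipschitz_with:
  fixes G P :: "real \<Rightarrow> 'a::metric_space"
  assumes geodesic: "\<forall>s\<in>{0..M}. \<forall>t\<in>{0..M}. dist (G s) (G t) = \<bar>s - t\<bar>"
    and joint: "G M = P \<beta>\<^sub>0" and "0 \<le> M" and \<beta>\<^sub>0: "\<beta>\<^sub>0 \<in> {0..L}"
    and P: "bilipschitz_with K {0..L} P" and "1 \<le> K"
    and c: "0 < c" "c \<le> 1"
    and recedes: "\<And>\<beta>. \<beta> \<in> {\<beta>\<^sub>0..L} \<Longrightarrow> M + c * (\<beta> - \<beta>\<^sub>0) \<le> dist (G 0) (P \<beta>)"
  shows "bilipschitz_with (max K (1/c)) {0..M + (L - \<beta>\<^sub>0)}
           (\<lambda>r. if r \<le> M then G r else P (\<beta>\<^sub>0 + r - M))"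
    (is "bilipschitz_with ?K ?I ?Q")
proof (rule bilipschitz_withI_ordered)
  have "1 \<le> ?K" "K \<le> ?K" using \<open>1 \<le> K\<close> by auto
  have "1 \<le> c * ?K"
    using c mult_left_mono[of "1/c" ?K c] by (simp add: max.cobounded2)
  then have c_bound: "1 / ?K \<le> c"
    using \<open>1 \<le> ?K\<close> by (simp add: divide_le_eq mult.commute)
  have P': "bilipschitz_with ?K {0..L} P"
    using bilipschitz_with_mono[OF P] \<open>1 \<le> K\<close> by simp
  have Q_G: "?Q r = G r" if "r \<le> M" for r using that by simp
  have Q_P: "?Q r = P (\<beta>\<^sub>0 + r - M)" if "M \<le> r" for r using that joint by auto
  fix r r' assume r: "r \<in> ?I" "r' \<in> ?I" "r \<le> r'"
  consider "r' \<le> M" | "M \<le> r" | "r < M" "M < r'" by linarith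
  then show "(r' - r) / ?K \<le> dist (?Q r) (?Q r') \<and> dist (?Q r) (?Q r') \<le> ?K * (r' - r)"
  proof cases
    case 1
    then have "dist (?Q r) (?Q r') = r' - r" using geodesic r by auto
    moreover have "(r' - r) / ?K \<le> r' - r" "r' - r \<le> ?K * (r' - r)"
      using \<open>1 \<le> ?K\<close> r(3) mult_left_mono[of 1 ?K "r' - r"] by (auto simp: divide_le_eq mult.commute)
    ultimately show ?thesis by simp
  next
    case 2
    then have "\<beta>\<^sub>0 + r - M \<in> {0..L}" "\<beta>\<^sub>0 + r' - M \<in> {0..L}" using r \<beta>\<^sub>0 by auto
    then show ?thesis
      using P' 2 r(3) Q_P[of r] Q_P[of r'] unfolding bilipschitz_with_def by fastforce
  next
    case 3
    define \<beta> where "\<beta> = \<beta>\<^sub>0 + r' - M"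
    have \<beta>: "\<beta> \<in> {\<beta>\<^sub>0..L}" using 3 r unfolding \<beta>_def by auto
    have Q: "?Q r = G r" "?Q r' = P \<beta>" using 3 Q_G Q_P unfolding \<beta>_def by auto
    have "dist (G 0) (G r) = r" "dist (G r) (G M) = M - r" using geodesic r 3 by auto
    have "M + c * (r' - M) \<le> dist (G 0) (G r) + dist (G r) (P \<beta>)"
      using recedes[OF \<beta>] dist_triangle[of "G 0" "P \<beta>" "G r"] unfolding \<beta>_def by simp
    then have "c * (r' - r) \<le> dist (G r) (P \<beta>)"
      using \<open>dist (G 0) (G r) = r\<close> c 3 mult_left_le_one_le[of "M - r" c]
      by (simp add: algebra_simps)
    moreover have "(r' - r) / ?K \<le> c * (r' - r)"
      using c_bound r(3) mult_right_mono[OF c_bound, of "r' - r"] by simp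
    moreover have "dist (G M) (P \<beta>) \<le> K * (r' - M)"
    proof -
      have "dist (P \<beta>\<^sub>0) (P \<beta>) \<le> K * \<bar>\<beta>\<^sub>0 - \<beta>\<bar>"
        using P \<beta> \<beta>\<^sub>0 unfolding bilipschitz_with_def by (meson atLeastAtMost_iff order_trans)
      then show ?thesis using joint \<beta> unfolding \<beta>_def by simp
    qed
    then have "dist (G r) (P \<beta>) \<le> (M - r) + K * (r' - M)"
      using dist_triangle[of "G r" "P \<beta>" "G M"] \<open>dist (G r) (G M) = M - r\<close> by linarith
    moreover have "(M - r) + K * (r' - M) \<le> ?K * (M - r) + ?K * (r' - M)"
      using \<open>1 \<le> ?K\<close> \<open>K \<le> ?K\<close> 3
      by (intro add_mono mult_right_mono) (auto simp: mult_le_cancel_right1)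
    ultimately show ?thesis using Q by (simp add: algebra_simps)
  qed
qed

lemma bilipschitz_curve_prepend_point:
  fixes P :: "real \<Rightarrow> 'a::metric_space" and u :: 'a
  assumes geo: "geodesic_space (UNIV :: 'a set)"
    and "0 \<le> L" and P: "bilipschitz_on {0..L} P" and "0 < \<eta>"
  shows "\<exists>T Q. 0 \<le> T \<and> bilipschitz_on {0..T} Q \<and> Q 0 = u \<and> Q T = P L \<and>
           (\<forall>r\<in>{0..T}. dist (Q r) u < dist u (P 0) + \<eta> \<or> Q r \<in> P ` {0..L})"
proof -
  obtain K where "1 \<le> K" and K: "bilipschitz_with K {0..L} P"
    using P unfolding bilipschitz_on_iff_with by blast
  define c where "c = min 1 (\<eta> / (L + 1))"
  have c: "0 < c" "c \<le> 1" using \<open>0 < \<eta>\<close> \<open>0 \<le> L\<close> unfolding c_def by auto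
  have "c * L \<le> \<eta> / (L + 1) * L"
    using \<open>0 \<le> L\<close> unfolding c_def by (intro mult_right_mono) auto
  also have "\<dots> < \<eta>" using \<open>0 \<le> L\<close> \<open>0 < \<eta>\<close> by (simp add: field_simps)
  finally have "c * L < \<eta>" .
  have cont: "continuous_on {0..L} (\<lambda>\<beta>. dist u (P \<beta>) - c * \<beta>)"
    using bilipschitz_with_imp_continuous_on[OF K] \<open>1 \<le> K\<close> by (intro continuous_intros) auto
  obtain \<beta>\<^sub>0 where \<beta>\<^sub>0: "\<beta>\<^sub>0 \<in> {0..L}"
    and minimal: "\<forall>\<beta>\<in>{0..L}. dist u (P \<beta>\<^sub>0) - c * \<beta>\<^sub>0 \<le> dist u (P \<beta>) - c * \<beta>"
    using continuous_attains_inf[OF compact_Icc _ cont] \<open>0 \<le> L\<close> by auto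
  define M where "M = dist u (P \<beta>\<^sub>0)"
  obtain G :: "real \<Rightarrow> 'a" where "G 0 = u" "G M = P \<beta>\<^sub>0"
    and geodesic: "\<forall>s\<in>{0..M}. \<forall>t\<in>{0..M}. dist (G s) (G t) = \<bar>s - t\<bar>"
    using geo unfolding geodesic_space_def M_def by blast
  have "M \<le> dist u (P 0) + c * \<beta>\<^sub>0"
    using minimal[rule_format, of 0] \<open>0 \<le> L\<close> unfolding M_def by simp
  also have "c * \<beta>\<^sub>0 \<le> c * L" using c \<beta>\<^sub>0 by (intro mult_left_mono) auto
  finally have M_small: "M < dist u (P 0) + \<eta>" using \<open>c * L < \<eta>\<close> by linarith
  have "0 \<le> M" unfolding M_def by simp
  define T where "T = M + (L - \<beta>\<^sub>0)"
  define Q where "Q = (\<lambda>r. if r \<le> M then G r else P (\<beta>\<^sub>0 + r - M))"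
  have "bilipschitz_with (max K (1/c)) {0..T} Q"
    unfolding T_def Q_def
  proof (rule geodesic_then_curve_bilipschitz_with[OF geodesic \<open>G M = P \<beta>\<^sub>0\<close> \<open>0 \<le> M\<close> \<beta>\<^sub>0 K \<open>1 \<le> K\<close> c])
    show "M + c * (\<beta> - \<beta>\<^sub>0) \<le> dist (G 0) (P \<beta>)" if "\<beta> \<in> {\<beta>\<^sub>0..L}" for \<beta>
      using minimal[rule_format, of \<beta>] that \<beta>\<^sub>0 \<open>G 0 = u\<close> unfolding M_def by (auto simp: algebra_simps)
  qed
  then have "bilipschitz_on {0..T} Q"
    unfolding bilipschitz_on_iff_with using \<open>1 \<le> K\<close> by (meson max.coboundedI1)
  moreover have "Q 0 = u" using \<open>G 0 = u\<close> \<open>0 \<le> M\<close> unfolding Q_def by simp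
  moreover have "Q T = P L"
  proof (cases "T \<le> M")
    case True
    then have "\<beta>\<^sub>0 = L" using \<beta>\<^sub>0 unfolding T_def by simp
    then show ?thesis using True \<open>G M = P \<beta>\<^sub>0\<close> \<beta>\<^sub>0 unfolding Q_def T_def by simp
  qed (simp add: Q_def T_def)
  moreover have "dist (Q r) u < dist u (P 0) + \<eta> \<or> Q r \<in> P ` {0..L}" if "r \<in> {0..T}" for r
  proof (cases "r \<le> M")
    case True
    then have "dist (Q r) u = r" using geodesic \<open>G 0 = u\<close> that unfolding Q_def by auto
    then show ?thesis using True M_small by simp
  next
    case False
    then have "Q r = P (\<beta>\<^sub>0 + r - M)" "\<beta>\<^sub>0 + r - M \<in> {0..L}"
      using that \<beta>\<^sub>0 unfolding Q_def T_def by auto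
    then show ?thesis by blast
  qed
  moreover have "0 \<le> T" using \<open>0 \<le> M\<close> \<beta>\<^sub>0 unfolding T_def by simp
  ultimately show ?thesis by blast
qed

lemma eps_nbhd_mono: "A \<subseteq> B \<Longrightarrow> eps_nbhd e A \<subseteq> eps_nbhd e B"
  unfolding eps_nbhd_def by blast

lemma bilipschitz_curve_along_chain:
  fixes p :: "nat \<Rightarrow> 'a::metric_space"
  assumes geo: "geodesic_space (UNIV :: 'a set)" and "0 < \<epsilon>"
    and "\<forall>i<N. dist (p i) (p (Suc i)) < \<epsilon>"
  shows "\<exists>L P. 0 \<le> L \<and> bilipschitz_on {0..L} P \<and> P 0 = p 0 \<and> P L = p N \<and>
           P ` {0..L} \<subseteq> eps_nbhd \<epsilon> (p ` {..N})"
  using assms(3)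
proof (induction N arbitrary: p)
  case 0
  have "bilipschitz_on {0..0} (\<lambda>_::real. p 0)" unfolding bilipschitz_on_def by auto
  moreover have "p 0 \<in> eps_nbhd \<epsilon> (p ` {..0})" using \<open>0 < \<epsilon>\<close> unfolding eps_nbhd_def by auto
  ultimately show ?case by (intro exI[of _ 0] exI[of _ "\<lambda>_::real. p 0"]) auto
next
  case (Suc N)
  have "\<forall>i<N. dist (p (Suc i)) (p (Suc (Suc i))) < \<epsilon>" using Suc.prems by simp
  then obtain L P where "0 \<le> L" "bilipschitz_on {0..L} P" "P 0 = p (Suc 0)" "P L = p (Suc N)"
    and P_near: "P ` {0..L} \<subseteq> eps_nbhd \<epsilon> ((\<lambda>i. p (Suc i)) ` {..N})"
    using Suc.IH[of "\<lambda>i. p (Suc i)"] by blast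
  have "dist (p 0) (p (Suc 0)) < \<epsilon>" using Suc.prems by simp
  then obtain T Q where "0 \<le> T" "bilipschitz_on {0..T} Q" "Q 0 = p 0" "Q T = P L"
    and Q_near: "\<forall>r\<in>{0..T}. dist (Q r) (p 0) < dist (p 0) (P 0) + (\<epsilon> - dist (p 0) (p (Suc 0)))
                   \<or> Q r \<in> P ` {0..L}"
    using bilipschitz_curve_prepend_point[OF geo \<open>0 \<le> L\<close> \<open>bilipschitz_on {0..L} P\<close>,
        of "\<epsilon> - dist (p 0) (p (Suc 0))" "p 0"] by auto
  have "(\<lambda>i. p (Suc i)) ` {..N} \<subseteq> p ` {..Suc N}" by auto
  then have P_near': "P ` {0..L} \<subseteq> eps_nbhd \<epsilon> (p ` {..Suc N})"
    using P_near eps_nbhd_mono by blast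
  have "Q ` {0..T} \<subseteq> eps_nbhd \<epsilon> (p ` {..Suc N})"
  proof (rule image_subsetI)
    fix r assume "r \<in> {0..T}"
    show "Q r \<in> eps_nbhd \<epsilon> (p ` {..Suc N})"
    proof (cases "Q r \<in> P ` {0..L}")
      case True
      then show ?thesis using P_near' by blast
    next
      case False
      then have "dist (Q r) (p 0) < \<epsilon>" using Q_near \<open>r \<in> {0..T}\<close> \<open>P 0 = p (Suc 0)\<close> by auto
      then show ?thesis unfolding eps_nbhd_def by (intro CollectI bexI[of _ "p 0"]) auto
    qed
  qed
  then show ?case using \<open>0 \<le> T\<close> \<open>bilipschitz_on {0..T} Q\<close> \<open>Q 0 = p 0\<close> \<open>Q T = P L\<close> \<open>P L = p (Suc N)\<close>
    by (intro exI[of _ T] exI[of _ Q]) simp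
qed

lemma path_fine_sampling:
  fixes g :: "real \<Rightarrow> 'a::metric_space"
  assumes "path g" "0 < \<epsilon>"
  obtains N :: nat where "0 < N" "\<forall>i<N. dist (g (i / N)) (g (Suc i / N)) < \<epsilon>"
proof -
  have "uniformly_continuous_on {0..1} g"
    using assms(1) unfolding path_def by (intro compact_uniformly_continuous) auto
  then obtain d where "0 < d"
    and d: "\<forall>x\<in>{0..1}. \<forall>x'\<in>{0..1}. dist x' x < d \<longrightarrow> dist (g x') (g x) < \<epsilon>"
    using \<open>0 < \<epsilon>\<close> unfolding uniformly_continuous_on_def by blast
  obtain N :: nat where "1 / d < N" using reals_Archimedean2 by blast
  moreover have "0 < 1 / d" using \<open>0 < d\<close> by simp
  ultimately have "0 < N" by linarith
  have "1 / N < d" using \<open>1 / d < N\<close> \<open>0 < d\<close> \<open>0 < N\<close> by (simp add: field_simps)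
  have "dist (g (i / N)) (g (Suc i / N)) < \<epsilon>" if "i < N" for i
  proof -
    have "dist (Suc i / N) (i / N) = 1 / N"
      by (simp add: dist_real_def diff_divide_distrib[symmetric])
    moreover have "i / N \<in> {0..1}" "Suc i / N \<in> {0..1}" using that by auto
    ultimately show ?thesis using d \<open>1 / N < d\<close> by (simp add: dist_commute)
  qed
  then show thesis using that \<open>0 < N\<close> by blast
qed

theorem lemma4p3:
  fixes \<Gamma> :: "'a::metric_space set" and a b :: 'a and \<epsilon> :: real
  assumes "geodesic_space (UNIV :: 'a set)"
    and "\<exists>g. arc g \<and> path_image g = \<Gamma> \<and> pathstart g = a \<and> pathfinish g = b"
    and "\<epsilon> > 0"
  shows "\<exists>s t (\<gamma>::real \<Rightarrow> 'a). s \<le> t \<and> bilipschitz_on {s..t} \<gamma> \<and>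
           \<gamma> ` {s..t} \<subseteq> eps_nbhd \<epsilon> \<Gamma> \<and> \<gamma> s = a \<and> \<gamma> t = b"
proof -
  obtain g where g: "arc g" "path_image g = \<Gamma>" "pathstart g = a" "pathfinish g = b"
    using assms(2) by blast
  obtain N :: nat where "0 < N" and close: "\<forall>i<N. dist (g (i / N)) (g (Suc i / N)) < \<epsilon>"
    using path_fine_sampling[OF arc_imp_path[OF g(1)] \<open>\<epsilon> > 0\<close>] by blast
  obtain L P where "0 \<le> L" "bilipschitz_on {0..L} P" "P 0 = g (0 / N)" "P L = g (N / N)"
    and near: "P ` {0..L} \<subseteq> eps_nbhd \<epsilon> ((\<lambda>i. g (i / N)) ` {..N})"
    using bilipschitz_curve_along_chain[OF assms(1) \<open>\<epsilon> > 0\<close>, of N "\<lambda>i. g (i / N)"] close by auto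
  have "(\<lambda>i. g (i / N)) ` {..N} \<subseteq> \<Gamma>"
    using g(2) \<open>0 < N\<close> unfolding path_image_def by (auto intro!: imageI)
  then have "P ` {0..L} \<subseteq> eps_nbhd \<epsilon> \<Gamma>" using near eps_nbhd_mono by blast
  moreover have "P 0 = a" "P L = b"
    using \<open>P 0 = g (0 / N)\<close> \<open>P L = g (N / N)\<close> \<open>0 < N\<close> g(3,4)
    unfolding pathstart_def pathfinish_def by auto
  ultimately show ?thesis using \<open>0 \<le> L\<close> \<open>bilipschitz_on {0..L} P\<close> by blast
qed

end
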